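(* Let $n,c,\sigma\ge1$ be integers, set $d=4\sigma$, let $p$ be a prime, and let $x\in\{0,\ldots,c\}^n$ have at most $\sigma$ nonzero coordinates. Let $\rho:\{1,\ldots,n\}\to\{1,\ldots,d\}$ be a uniformly random mapping and $r_1,\ldots,r_n$ independent uniform elements of $\{0,\ldots,p-1\}$, and define $\phi_j(x)=\big(\sum_{i:\rho(i)=j}x_ir_i\big)\bmod p$ for $j=1,\ldots,d$. Then the expected number of nonzero entries of $\phi(x)$ is at most $\tfrac d4$, and with probability at least $\tfrac12$ at least half of the entries of $\phi(x)$ are zero.
   Context: FSketch construction as described in the claim. *)

theory Defs
  imports "HOL-Probability.Probability"
begin

definition fsketch :: "nat \<Rightarrow> nat \<Rightarrow> (nat \<Rightarrow> nat) \<Rightarrow> (nat \<Rightarrow> nat) \<Rightarrow> (nat \<Rightarrow> nat) \<Rightarrow> nat \<Rightarrow> nat" where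
  "fsketch n p x \<rho> r j = (\<Sum>i\<in>{i\<in>{1..n}. \<rho> i = j}. x i * r i) mod p"

definition sketch_space :: "nat \<Rightarrow> nat \<Rightarrow> nat \<Rightarrow> ((nat \<Rightarrow> nat) \<times> (nat \<Rightarrow> nat)) pmf" where
  "sketch_space n d p = pair_pmf (pmf_of_set (PiE {1..n} (\<lambda>_. {1..d})))
                                 (pmf_of_set (PiE {1..n} (\<lambda>_. {0..<p})))"

end

theory Submission
  imports Defs
begin

text \<open>The bound holds for every outcome, not only on average: a bucket j of the sketch can be
  nonzero only if some coordinate in the support of x is hashed to j, so at most
  \<open>\<sigma> = d/4\<close> of the d buckets are nonzero, whatever \<open>\<rho>\<close> and r are. Primality of p and the
  range of the entries of x play no role.\<close>

lemma fsketch_nonzero_imp_in_image_support: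
  assumes "fsketch n p x \<rho> r j \<noteq> 0"
  shows "j \<in> \<rho> ` {i\<in>{1..n}. x i \<noteq> 0}"
proof (rule ccontr)
  assume "j \<notin> \<rho> ` {i\<in>{1..n}. x i \<noteq> 0}"
  then have "(\<Sum>i\<in>{i\<in>{1..n}. \<rho> i = j}. x i * r i) = 0"
    by (intro sum.neutral) auto
  then show False
    using assms by (simp only: fsketch_def mod_0)
qed

lemma card_fsketch_nonzero_le_card_support:
  "card {j\<in>J. fsketch n p x \<rho> r j \<noteq> 0} \<le> card {i\<in>{1..n}. x i \<noteq> 0}"
proof -
  let ?S = "{i\<in>{1..n}. x i \<noteq> 0}"
  have "{j\<in>J. fsketch n p x \<rho> r j \<noteq> 0} \<subseteq> \<rho> ` ?S"
    using fsketch_nonzero_imp_in_image_support by blast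
  then have "card {j\<in>J. fsketch n p x \<rho> r j \<noteq> 0} \<le> card (\<rho> ` ?S)"
    by (intro card_mono) auto
  also have "\<dots> \<le> card ?S"
    by (intro card_image_le) auto
  finally show ?thesis .
qed

lemma card_filter_add_card_filter_not:
  assumes "finite A"
  shows "card {a\<in>A. P a} + card {a\<in>A. \<not> P a} = card A"
proof -
  have "card {a\<in>A. P a} + card {a\<in>A. \<not> P a} = card ({a\<in>A. P a} \<union> {a\<in>A. \<not> P a})"
    using assms by (intro card_Un_disjoint[symmetric]) auto
  also have "{a\<in>A. P a} \<union> {a\<in>A. \<not> P a} = A"
    by blast
  finally show ?thesis .
qed

lemma measure_pmf_expectation_le_bound:
  fixes f :: "'a \<Rightarrow> real"
  assumes "\<And>z. \<bar>f z\<bar> \<le> c"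
  shows "measure_pmf.expectation M f \<le> c"
proof (rule measure_pmf.integral_le_const)
  show "integrable (measure_pmf M) f"
    using assms by (intro measure_pmf.integrable_const_bound[where B = c]) auto
  show "AE z in measure_pmf M. f z \<le> c"
    using assms abs_le_D1 by blast
qed

theorem lemma7:
  fixes n c \<sigma> d p :: nat and x :: "nat \<Rightarrow> nat"
  assumes "n \<ge> 1" and "c \<ge> 1" and "\<sigma> \<ge> 1" and "d = 4 * \<sigma>" and "prime p"
    and "x \<in> PiE {1..n} (\<lambda>_. {0..c})"
    and "card {i\<in>{1..n}. x i \<noteq> 0} \<le> \<sigma>"
  shows "measure_pmf.expectation (sketch_space n d p)
           (\<lambda>(\<rho>, r). real (card {j\<in>{1..d}. fsketch n p x \<rho> r j \<noteq> 0})) \<le> real d / 4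
         \<and> measure_pmf.prob (sketch_space n d p)
           {(\<rho>, r). 2 * card {j\<in>{1..d}. fsketch n p x \<rho> r j = 0} \<ge> d} \<ge> 1 / 2"
proof
  have nonzero_le: "card {j\<in>{1..d}. fsketch n p x \<rho> r j \<noteq> 0} \<le> \<sigma>" for \<rho> r
    using card_fsketch_nonzero_le_card_support assms(7) le_trans by blast
  then show "measure_pmf.expectation (sketch_space n d p)
      (\<lambda>(\<rho>, r). real (card {j\<in>{1..d}. fsketch n p x \<rho> r j \<noteq> 0})) \<le> real d / 4"
    using assms(4) by (intro measure_pmf_expectation_le_bound) (auto split: prod.split)
  have "2 * card {j\<in>{1..d}. fsketch n p x \<rho> r j = 0} \<ge> d" for \<rho> r
    using card_filter_add_card_filter_not[of "{1..d}" "\<lambda>j. fsketch n p x \<rho> r j = 0"]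
      nonzero_le[of \<rho> r] assms(4) by simp
  then have "{(\<rho>, r). 2 * card {j\<in>{1..d}. fsketch n p x \<rho> r j = 0} \<ge> d} = UNIV"
    by auto
  then show "measure_pmf.prob (sketch_space n d p)
      {(\<rho>, r). 2 * card {j\<in>{1..d}. fsketch n p x \<rho> r j = 0} \<ge> d} \<ge> 1 / 2"
    by simp
qed

end
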